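(* Let $\alpha$ be a hybrid program, $S\subseteq \mathrm{VAR}(\alpha)$ a set of sensor variables, and $o_1,o_2:S\to\mathbb{R}_{\ge0}$ offset functions with $o_1(s)\le o_2(s)$ for all $s\in S$. Let $r,r_1,r_2\in\mathbb{R}$ and formulas $\phi_{pre},\phi_{post}$ be such that $\alpha$ is backward $r$-safe, $\alpha_{S,o_1}$ is backward $r_1$-safe, and $\alpha_{S,o_2}$ is backward $r_2$-safe, each for $\phi_{pre}$ and $\phi_{post}$. Then $r_2\le r_1\le r$.
   Context: Fix a set $V$ of real-valued variables; a state is a map $\omega:V\to\mathbb{R}$, $\mathcal{S}$ the set of states. Hybrid programs: $x:=\theta$, $x:=*$, $x'=\theta\,\&\,Q$, $?\phi$, $\alpha;\beta$, $\alpha\cup\beta$, $\alpha^*$, with the standard relational semantics $[\![\alpha]\!]\subseteq\mathcal{S}\times\mathcal{S}$ of differential dynamic logic (assignment updates one variable; $x:=*$ sets $x$ to an arbitrary real; $x'=\theta\,\&\,Q$ follows a solution of the ODE for some duration $r\ge0$ staying in $[\![Q]\!]$ throughout; test, relational composition, union, reflexive-transitive closure). Formulas of dL (comparisons, $\neg,\wedge,\forall$, $[\alpha]\phi$) have semantics $[\![\phi]\!]\subseteq\mathcal{S}$, with $[\![[\alpha]\phi]\!]=\{\omega\mid\forall\nu,(\omega,\nu)\in[\![\alpha]\!]\Rightarrow\nu\in[\![\phi]\!]\}$. $\mathrm{VAR}(\alpha)$ is the set of variables of $\alpha$ (its free and bound variables). Distance: $d(\omega,\nu)=\sqrt{\sum_{x\in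 V}(\omega(x)-\nu(x))^2}$; for $X\subseteq\mathcal{S}$, $\mathrm{Dist}(\omega,X)=\inf\{d(\omega,\nu)\mid\nu\notin X\}$ if $\omega\in X$ and $-\inf\{d(\omega,\nu)\mid\nu\in X\}$ if $\omega\notin X$ (infima in $\mathbb{R}\cup\{\pm\infty\}$, $\inf\emptyset=\infty$). $\alpha$ is backward $r$-safe for $\phi_{pre}$ and $\phi_{post}$ if $r=\inf\{\mathrm{Dist}(\omega,[\![[\alpha]\phi_{post}]\!])\mid\omega\in[\![\phi_{pre}]\!]\}$. Sensor modeling: each sensor variable $q_s$ has an associated physical variable $q_p$, and (modeling convention) sensor reads are assignments $q_s:=q_p$. Bounded sensor attack: for $S\subseteq\mathrm{VAR}(\alpha)$ and $o:S\to\mathbb{R}_{\ge0}$, $\alpha_{S,o}$ is the program obtained from $\alpha$ by replacing every assignment to a variable $q_s\in S$ with $q_s:=*\,;\ ?(q_s\ge q_p-o(q_s)\wedge q_s\le q_p+o(q_s))$. *)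

theory Defs
  imports Complex_Main "HOL-Library.Extended_Real"
begin

type_synonym 'v state = "'v \<Rightarrow> real"

datatype 'v trm =
    Var 'v
  | Const real
  | Neg "'v trm"
  | Plus "'v trm" "'v trm"
  | Minus "'v trm" "'v trm"
  | Times "'v trm" "'v trm"

datatype 'v hp =
    Assign 'v "'v trm"
  | AssignAny 'v
  | ODE 'v "'v trm" "'v fml"
  | Test "'v fml"
  | Seq "'v hp" "'v hp"
  | Choice "'v hp" "'v hp"
  | Loop "'v hp"
and 'v fml =
    Geq "'v trm" "'v trm"
  | Gt "'v trm" "'v trm"
  | Eq "'v trm" "'v trm"
  | Not "'v fml"
  | And "'v fml" "'v fml"
  | Forall 'v "'v fml"
  | Box "'v hp" "'v fml"

fun trm_sem :: "'v trm \<Rightarrow> 'v state \<Rightarrow> real" where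
  "trm_sem (Var x) \<omega> = \<omega> x"
| "trm_sem (Const c) \<omega> = c"
| "trm_sem (Neg t) \<omega> = - trm_sem t \<omega>"
| "trm_sem (Plus s t) \<omega> = trm_sem s \<omega> + trm_sem t \<omega>"
| "trm_sem (Minus s t) \<omega> = trm_sem s \<omega> - trm_sem t \<omega>"
| "trm_sem (Times s t) \<omega> = trm_sem s \<omega> * trm_sem t \<omega>"

fun hp_sem :: "'v hp \<Rightarrow> ('v state \<times> 'v state) set"
and fml_sem :: "'v fml \<Rightarrow> 'v state set" where
  "hp_sem (Assign x \<theta>) = {(\<omega>, \<omega>(x := trm_sem \<theta> \<omega>)) | \<omega>. True}"
| "hp_sem (AssignAny x) = {(\<omega>, \<omega>(x := c)) | \<omega> c. True}"
| "hp_sem (ODE x \<theta> Q) =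
     {(\<omega>, \<nu>) | \<omega> \<nu>. \<exists>r::real. \<exists>\<phi>::real \<Rightarrow> 'v state. r \<ge> 0 \<and> \<phi> 0 = \<omega> \<and> \<phi> r = \<nu> \<and>
        (\<forall>t\<in>{0..r}. (\<forall>y. y \<noteq> x \<longrightarrow> \<phi> t y = \<omega> y) \<and> \<phi> t \<in> fml_sem Q \<and>
           ((\<lambda>s. \<phi> s x) has_real_derivative trm_sem \<theta> (\<phi> t)) (at t within {0..r}))}"
| "hp_sem (Test \<phi>) = {(\<omega>, \<omega>) | \<omega>. \<omega> \<in> fml_sem \<phi>}"
| "hp_sem (Seq a b) = hp_sem a O hp_sem b"
| "hp_sem (Choice a b) = hp_sem a \<union> hp_sem b"
| "hp_sem (Loop a) = (hp_sem a)\<^sup>*"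
| "fml_sem (Geq s t) = {\<omega>. trm_sem s \<omega> \<ge> trm_sem t \<omega>}"
| "fml_sem (Gt s t) = {\<omega>. trm_sem s \<omega> > trm_sem t \<omega>}"
| "fml_sem (Eq s t) = {\<omega>. trm_sem s \<omega> = trm_sem t \<omega>}"
| "fml_sem (Not \<phi>) = - fml_sem \<phi>"
| "fml_sem (And \<phi> \<psi>) = fml_sem \<phi> \<inter> fml_sem \<psi>"
| "fml_sem (Forall x \<phi>) = {\<omega>. \<forall>c. \<omega>(x := c) \<in> fml_sem \<phi>}"
| "fml_sem (Box a \<phi>) = {\<omega>. \<forall>\<nu>. (\<omega>, \<nu>) \<in> hp_sem a \<longrightarrow> \<nu> \<in> fml_sem \<phi>}"

(* Variables occurring in terms, programs and formulas (VAR = free and bound variables) *)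
fun trm_vars :: "'v trm \<Rightarrow> 'v set" where
  "trm_vars (Var x) = {x}"
| "trm_vars (Const c) = {}"
| "trm_vars (Neg t) = trm_vars t"
| "trm_vars (Plus s t) = trm_vars s \<union> trm_vars t"
| "trm_vars (Minus s t) = trm_vars s \<union> trm_vars t"
| "trm_vars (Times s t) = trm_vars s \<union> trm_vars t"

fun hp_vars :: "'v hp \<Rightarrow> 'v set"
and fml_vars :: "'v fml \<Rightarrow> 'v set" where
  "hp_vars (Assign x \<theta>) = {x} \<union> trm_vars \<theta>"
| "hp_vars (AssignAny x) = {x}"
| "hp_vars (ODE x \<theta> Q) = {x} \<union> trm_vars \<theta> \<union> fml_vars Q"
| "hp_vars (Test \<phi>) = fml_vars \<phi>"
| "hp_vars (Seq a b) = hp_vars a \<union> hp_vars b"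
| "hp_vars (Choice a b) = hp_vars a \<union> hp_vars b"
| "hp_vars (Loop a) = hp_vars a"
| "fml_vars (Geq s t) = trm_vars s \<union> trm_vars t"
| "fml_vars (Gt s t) = trm_vars s \<union> trm_vars t"
| "fml_vars (Eq s t) = trm_vars s \<union> trm_vars t"
| "fml_vars (Not \<phi>) = fml_vars \<phi>"
| "fml_vars (And \<phi> \<psi>) = fml_vars \<phi> \<union> fml_vars \<psi>"
| "fml_vars (Forall x \<phi>) = {x} \<union> fml_vars \<phi>"
| "fml_vars (Box a \<phi>) = hp_vars a \<union> fml_vars \<phi>"

definition sdist :: "('v::finite) state \<Rightarrow> 'v state \<Rightarrow> real" where
  "sdist \<omega> \<nu> = sqrt (\<Sum>x\<in>UNIV. (\<omega> x - \<nu> x)\<^sup>2)"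

(* signed distance to the boundary of X; infima in the extended reals, Inf {} = \<infinity> *)
definition Dist :: "('v::finite) state \<Rightarrow> 'v state set \<Rightarrow> ereal" where
  "Dist \<omega> X = (if \<omega> \<in> X then Inf {ereal (sdist \<omega> \<nu>) | \<nu>. \<nu> \<notin> X}
                else - Inf {ereal (sdist \<omega> \<nu>) | \<nu>. \<nu> \<in> X})"

definition backward_safe :: "('v::finite) hp \<Rightarrow> real \<Rightarrow> 'v fml \<Rightarrow> 'v fml \<Rightarrow> bool" where
  "backward_safe \<alpha> r pre post \<longleftrightarrow>
     ereal r = Inf {Dist \<omega> (fml_sem (Box \<alpha> post)) | \<omega>. \<omega> \<in> fml_sem pre}"

(* modeling convention: every assignment to a sensor variable q_s in S is a sensor read q_s := q_p *)
fun sensor_reads :: "('v \<Rightarrow> 'v) \<Rightarrow> 'v set \<Rightarrow> 'v hp \<Rightarrow> bool" where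
  "sensor_reads phys S (Assign x \<theta>) = (x \<in> S \<longrightarrow> \<theta> = Var (phys x))"
| "sensor_reads phys S (AssignAny x) = True"
| "sensor_reads phys S (ODE x \<theta> Q) = True"
| "sensor_reads phys S (Test \<phi>) = True"
| "sensor_reads phys S (Seq a b) = (sensor_reads phys S a \<and> sensor_reads phys S b)"
| "sensor_reads phys S (Choice a b) = (sensor_reads phys S a \<and> sensor_reads phys S b)"
| "sensor_reads phys S (Loop a) = sensor_reads phys S a"

(* bounded sensor attack alpha_{S,off}; phys maps each sensor variable q_s to its physical variable q_p.
   Every (deterministic) assignment q_s := theta with q_s in S is replaced. *)
fun attack :: "('v \<Rightarrow> 'v) \<Rightarrow> 'v set \<Rightarrow> ('v \<Rightarrow> real) \<Rightarrow> 'v hp \<Rightarrow> 'v hp" where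
  "attack phys S off (Assign x \<theta>) =
     (if x \<in> S then Seq (AssignAny x)
          (Test (And (Geq (Var x) (Minus (Var (phys x)) (Const (off x))))
                     (Geq (Plus (Var (phys x)) (Const (off x))) (Var x))))
      else Assign x \<theta>)"
| "attack phys S off (AssignAny x) = AssignAny x"
| "attack phys S off (ODE x \<theta> Q) = ODE x \<theta> Q"
| "attack phys S off (Test \<phi>) = Test \<phi>"
| "attack phys S off (Seq a b) = Seq (attack phys S off a) (attack phys S off b)"
| "attack phys S off (Choice a b) = Choice (attack phys S off a) (attack phys S off b)"
| "attack phys S off (Loop a) = Loop (attack phys S off a)"

end

theory Submission
  imports Defs
begin

text \<open>Both inequalities are instances of one monotonicity principle: enlarging the transition
  relation of a program shrinks the set of states satisfying its box modality, signed distances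
  to a smaller set are smaller, and hence so is their infimum over the precondition. A sensor read
  \<open>q\<^sub>s := q\<^sub>p\<close> is one of the behaviours of its attacked version as soon as the offset is
  nonnegative, and attacks with larger offsets admit more behaviours.\<close>

lemma hp_sem_subset_attack:
  assumes "\<forall>s\<in>S. 0 \<le> off s" and "sensor_reads phys S a"
  shows "hp_sem a \<subseteq> hp_sem (attack phys S off a)"
  using assms(2)
proof (induction a)
  case (Assign x \<theta>)
  show ?case
  proof (cases "x \<in> S")
    case True
    have "(\<omega>, \<omega>(x := trm_sem \<theta> \<omega>)) \<in> hp_sem (attack phys S off (Assign x \<theta>))" for \<omega>
    proof -
      let ?\<nu> = "\<omega>(x := \<omega> (phys x))"
      let ?test = "Test (And
          (Geq (Var x) (Minus (Var (phys x)) (Const (off x))))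
          (Geq (Plus (Var (phys x)) (Const (off x))) (Var x)))"
      have "(\<omega>, ?\<nu>) \<in> hp_sem (AssignAny x)"
        by auto
      moreover have "?\<nu> (phys x) = \<omega> (phys x)"
        by (cases "phys x = x") auto
      with True assms(1) have "(?\<nu>, ?\<nu>) \<in> hp_sem ?test"
        by auto
      ultimately have "(\<omega>, ?\<nu>) \<in> hp_sem (AssignAny x) O hp_sem ?test"
        by (rule relcompI)
      with True Assign show ?thesis
        by (simp only: attack.simps if_True hp_sem.simps(5) sensor_reads.simps trm_sem.simps)
    qed
    then show ?thesis
      by auto
  qed simp
next
  case (Seq a b)
  then show ?case by (auto intro!: relcomp_mono)
next
  case (Loop a)
  then show ?case by (auto intro!: rtrancl_mono)
qed auto

lemma hp_sem_attack_mono: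
  assumes "\<forall>s\<in>S. o1 s \<le> o2 s"
  shows "hp_sem (attack phys S o1 a) \<subseteq> hp_sem (attack phys S o2 a)"
proof (induction a)
  case (Assign x \<theta>)
  show ?case
    using assms by (fastforce simp: relcomp_unfold)
next
  case (Seq a b)
  then show ?case by (auto intro!: relcomp_mono)
next
  case (Loop a)
  then show ?case by (auto intro!: rtrancl_mono)
qed auto

lemma fml_sem_Box_antimono:
  "hp_sem a \<subseteq> hp_sem b \<Longrightarrow> fml_sem (Box b \<phi>) \<subseteq> fml_sem (Box a \<phi>)"
  by auto

lemma Inf_sdist_nonneg: "0 \<le> Inf {ereal (sdist \<omega> \<nu>) | \<nu>. P \<nu>}"
  by (rule Inf_greatest) (auto simp: sdist_def intro!: sum_nonneg)

lemma Dist_mono: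
  assumes "X \<subseteq> Y"
  shows "Dist \<omega> X \<le> Dist \<omega> Y"
proof (cases "\<omega> \<in> X \<longleftrightarrow> \<omega> \<in> Y")
  case True
  with assms show ?thesis
    unfolding Dist_def by (auto intro!: Inf_superset_mono)
next
  case False
  with assms have "\<omega> \<notin> X" "\<omega> \<in> Y"
    by auto
  then show ?thesis
    using Inf_sdist_nonneg[of \<omega> "\<lambda>\<nu>. \<nu> \<in> X"] Inf_sdist_nonneg[of \<omega> "\<lambda>\<nu>. \<nu> \<notin> Y"]
    unfolding Dist_def by (simp add: order_trans[of _ 0])
qed

lemma backward_safe_antimono:
  assumes "hp_sem a \<subseteq> hp_sem b"
    and "backward_safe a ra pre post" and "backward_safe b rb pre post"
  shows "rb \<le> ra"
proof -
  have "Dist \<omega> (fml_sem (Box b post)) \<le> Dist \<omega> (fml_sem (Box a post))" for \<omega>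
    using Dist_mono[OF fml_sem_Box_antimono[OF assms(1)]] .
  then have "Inf {Dist \<omega> (fml_sem (Box b post)) | \<omega>. \<omega> \<in> fml_sem pre}
      \<le> Inf {Dist \<omega> (fml_sem (Box a post)) | \<omega>. \<omega> \<in> fml_sem pre}"
    by (intro Inf_mono) blast
  with assms(2,3) have "ereal rb \<le> ereal ra"
    unfolding backward_safe_def by simp
  then show ?thesis
    by simp
qed

theorem theorem2:
  fixes \<alpha> :: "('v::finite) hp"
    and phys :: "'v \<Rightarrow> 'v"
    and S :: "'v set"
    and o1 o2 :: "'v \<Rightarrow> real"
    and r r1 r2 :: real
    and pre post :: "'v fml"
  assumes "S \<subseteq> hp_vars \<alpha>"
    and "sensor_reads phys S \<alpha>"
    and "\<forall>s\<in>S. 0 \<le> o1 s"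
    and "\<forall>s\<in>S. 0 \<le> o2 s"
    and "\<forall>s\<in>S. o1 s \<le> o2 s"
    and "backward_safe \<alpha> r pre post"
    and "backward_safe (attack phys S o1 \<alpha>) r1 pre post"
    and "backward_safe (attack phys S o2 \<alpha>) r2 pre post"
  shows "r2 \<le> r1 \<and> r1 \<le> r"
proof
  show "r2 \<le> r1"
    using backward_safe_antimono[OF hp_sem_attack_mono[OF assms(5)] assms(7,8)] .
  show "r1 \<le> r"
    using backward_safe_antimono[OF hp_sem_subset_attack[OF assms(3,2)] assms(6,7)] .
qed

end
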